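(* Fix $\varepsilon\in(0,1/2)$ and, for each integer $K\ge 2$, let $c=c(K)$ and $r=r(K)$ be positive integers satisfying \[ \left|\frac{c(K)}{K}-\left(1-\sqrt{1-2\varepsilon}\right)\right|<K^{-1/4},\qquad \left|\frac{r(K)}{K}-\left(1-\sqrt{1-2\varepsilon}\right)\right|<K^{-1/4}. \] Then \[ \lim_{K\to\infty}\left(1+\sum_{\ell=0}^{2K-2}\frac{K-c}{(\ell+1)K-h(\ell+1)}\prod_{t=1}^{\ell}\frac{K-r\,\mathbf 1_{\{t\text{ odd}\}}-c\,\mathbf 1_{\{t\text{ even}\}}-\lfloor t/2\rfloor}{tK-h(t)}\right)=\exp\left\{\sqrt{1-2\varepsilon}\right\}, \] where the empty product (for $\ell=0$) equals $1$.
   Context: For a positive integer $t$, $h(t)=\sum_{i=1}^{t}\lfloor i/2\rfloor$. *)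

theory Defs
  imports Complex_Main
begin

definition h :: "nat \<Rightarrow> nat" where
  "h t = (\<Sum>i=1..t. i div 2)"

end

theory Submission
  imports Defs "HOL-Analysis.Analysis"
begin

(* Write s = sqrt (1 - 2 \<epsilon>), so that c/K and r/K tend to 1 - s. In the t-th factor of the
   product the numerator is about s K and the denominator about t K, so the l-th summand tends
   to s^(l+1)/(l+1)!. Since h t \<le> t (t+1)/4 \<le> t K/2, every factor is bounded by 2/t,
   hence the l-th summand by 2^(l+1)/(l+1)! uniformly in K, and Tannery's theorem turns the
   limit of the sums into 1 + (exp s - 1). *)

lemma tendsto_of_abs_diff_less_powr:
  fixes x :: "nat \<Rightarrow> real"
  assumes "\<And>K. K \<ge> k \<Longrightarrow> \<bar>x K - a\<bar> < real K powr e" "e < 0"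
  shows "x \<longlonglongrightarrow> a"
proof -
  have "(\<lambda>K. real K powr e) \<longlonglongrightarrow> 0"
    using assms(2) by (intro tendsto_neg_powr) (auto simp: filterlim_real_sequentially)
  moreover have "eventually (\<lambda>K. norm (x K - a) \<le> real K powr e) sequentially"
    using eventually_ge_at_top[of k] by eventually_elim (use assms(1) in fastforce)
  ultimately have "(\<lambda>K. x K - a) \<longlonglongrightarrow> 0" by (rule Lim_null_comparison[rotated])
  then show ?thesis by (simp add: LIM_zero_iff)
qed

lemma eventually_le_of_ratio_tendsto:
  assumes "(\<lambda>K. real (x K) / real K) \<longlonglongrightarrow> a" "a < 1"
  shows "eventually (\<lambda>K. x K \<le> K) sequentially"
  using order_tendstoD(2)[OF assms] eventually_gt_at_top[of "0::nat"]
  by eventually_elim (auto simp: divide_less_eq)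

lemma linear_ratio_tendsto:
  fixes x :: "nat \<Rightarrow> real"
  assumes "(\<lambda>K. x K / real K) \<longlonglongrightarrow> a" "t \<noteq> 0"
  shows "(\<lambda>K. (real K - x K - d) / (t * real K - b)) \<longlonglongrightarrow> (1 - a) / t"
proof -
  have "(\<lambda>K. (1 - x K / real K - d / real K) / (t - b / real K)) \<longlonglongrightarrow> (1 - a - 0) / (t - 0)"
    using assms by (intro tendsto_intros tendsto_divide_0[OF tendsto_const]
                          filterlim_real_sequentially) auto
  moreover have "eventually (\<lambda>K. (1 - x K / real K - d / real K) / (t - b / real K)
                   = (real K - x K - d) / (t * real K - b)) sequentially"
    using eventually_gt_at_top[of "0::nat"]
  proof eventually_elim
    case (elim K)
    then have "(1 - x K / real K - d / real K) / (t - b / real K)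
             = ((real K - x K - d) / real K) / ((t * real K - b) / real K)"
      by (simp add: diff_divide_distrib)
    then show ?case using elim by simp
  qed
  ultimately show ?thesis by (simp add: tendsto_cong)
qed

lemma sums_exp_minus_one:
  fixes x :: real
  shows "(\<lambda>n. x^(n+1) / fact (n+1)) sums (exp x - 1)"
proof -
  have "(\<lambda>n. x^n /\<^sub>R fact n) sums exp x" by (rule exp_converges)
  then have "(\<lambda>n. x^Suc n /\<^sub>R fact (Suc n)) sums (exp x - 1)"
    by (subst sums_Suc_iff) simp
  then show ?thesis by (simp add: divide_inverse_commute)
qed

lemma tendsto_truncated_sum_tannery:
  fixes F :: "nat \<Rightarrow> nat \<Rightarrow> 'a::{real_normed_algebra,banach}"
  assumes limit: "\<And>l. (\<lambda>K. F K l) \<longlonglongrightarrow> f l"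
      and bound: "eventually (\<lambda>K. \<forall>l \<le> N K. norm (F K l) \<le> M l) sequentially"
      and "\<And>l. 0 \<le> M l" "summable M" "filterlim N at_top sequentially"
  shows "(\<lambda>K. \<Sum>l=0..N K. F K l) \<longlonglongrightarrow> (\<Sum>l. f l)"
proof -
  define T where "T l K = (if l \<le> N K then F K l else 0)" for l K
  have "(\<lambda>K. T l K) \<longlonglongrightarrow> f l" for l
  proof -
    have "eventually (\<lambda>K. l \<le> N K) sequentially" using assms(5) by (simp add: filterlim_at_top)
    then have "eventually (\<lambda>K. F K l = T l K) sequentially" by eventually_elim (simp add: T_def)
    then show ?thesis using limit by (rule tendsto_cong[THEN iffD1])
  qed
  moreover have "eventually (\<lambda>(l,K). norm (T l K) \<le> M l) (at_top \<times>\<^sub>F sequentially)"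
  proof -
    have "norm (T l K) \<le> M l" if "\<forall>l \<le> N K. norm (F K l) \<le> M l" for l K
      using that assms(3)[of l] by (simp add: T_def)
    then show ?thesis unfolding eventually_prod_filter using bound by blast
  qed
  ultimately have "(\<lambda>K. \<Sum>l. T l K) \<longlonglongrightarrow> (\<Sum>l. f l)"
    using tannerys_theorem[of T f sequentially M] assms(4) by simp
  moreover have "(\<Sum>l. T l K) = (\<Sum>l=0..N K. F K l)" for K
    by (subst suminf_finite[of "{0..N K}"]) (auto simp: T_def)
  ultimately show ?thesis by simp
qed

lemma h_le: "4 * h t \<le> t * (t+1)"
proof (induction t)
  case 0
  then show ?case by (simp add: h_def)
next
  case (Suc t)
  have "h (Suc t) = h t + Suc t div 2" by (simp add: h_def)
  moreover have "4 * (Suc t div 2) \<le> 2 * Suc t" by presburger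
  ultimately show ?case using Suc by (simp add: algebra_simps)
qed

lemma half_le_denominator:
  assumes "t + 1 \<le> 2*K"
  shows "real t * real K / 2 \<le> real t * real K - real (h t)"
proof -
  have "4 * real (h t) \<le> real t * (real t + 1)"
    using h_le[of t] by (metis of_nat_1 of_nat_add of_nat_le_iff of_nat_mult of_nat_numeral)
  moreover have "real t * (real t + 1) \<le> real t * (2 * real K)"
    using assms by (intro mult_left_mono) (auto simp flip: of_nat_add)
  ultimately show ?thesis by linarith
qed

lemma abs_divide_denominator_le:
  assumes "\<bar>x\<bar> \<le> real K" "1 \<le> t" "t + 1 \<le> 2*K"
  shows "\<bar>x / (real t * real K - real (h t))\<bar> \<le> 2 / real t"
proof -
  let ?D = "real t * real K - real (h t)"
  have half_pos: "0 < real t * real K / 2" using assms by auto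
  have half_le: "real t * real K / 2 \<le> ?D" using assms(3) by (rule half_le_denominator)
  then have D_pos: "0 < ?D" using half_pos by linarith
  then have "\<bar>x / ?D\<bar> \<le> real K / ?D" using assms(1) by (simp add: abs_divide divide_right_mono)
  also have "\<dots> \<le> real K / (real t * real K / 2)"
    using half_le half_pos D_pos by (intro divide_left_mono) auto
  also have "\<dots> = 2 / real t" using half_pos by (auto simp: field_simps)
  finally show ?thesis .
qed

definition summand_factor :: "nat \<Rightarrow> nat \<Rightarrow> nat \<Rightarrow> nat \<Rightarrow> real" where
  "summand_factor K c r t =
     (real K - (if odd t then real r else 0) - (if even t then real c else 0) - real (t div 2))
     / (real t * real K - real (h t))"

definition summand :: "nat \<Rightarrow> nat \<Rightarrow> nat \<Rightarrow> nat \<Rightarrow> real" where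
  "summand K c r l =
     (real K - real c) / (real (l+1) * real K - real (h (l+1))) * (\<Prod>t=1..l. summand_factor K c r t)"

lemma abs_summand_le:
  assumes "c \<le> K" "r \<le> K" "l + 2 \<le> 2*K"
  shows "\<bar>summand K c r l\<bar> \<le> 2^(l+1) / fact (l+1)"
proof -
  have factor_le: "\<bar>summand_factor K c r t\<bar> \<le> 2 / real t" if "t \<in> {1..l}" for t
  proof -
    have "t div 2 \<le> K" using that assms by auto
    then show ?thesis
      unfolding summand_factor_def using that assms by (intro abs_divide_denominator_le) auto
  qed
  have "\<bar>\<Prod>t=1..l. summand_factor K c r t\<bar> \<le> (\<Prod>t=1..l. 2 / real t)"
    unfolding abs_prod by (intro prod_mono) (use factor_le in auto)
  also have "\<dots> = 2^l / fact l" by (simp add: prod_dividef fact_prod)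
  finally have prod_le: "\<bar>\<Prod>t=1..l. summand_factor K c r t\<bar> \<le> 2^l / fact l" .
  have first_le: "\<bar>(real K - real c) / (real (l+1) * real K - real (h (l+1)))\<bar> \<le> 2 / real (l+1)"
    using assms by (intro abs_divide_denominator_le) auto
  have "\<bar>summand K c r l\<bar> \<le> 2 / real (l+1) * (2^l / fact l)"
    unfolding summand_def abs_mult by (intro mult_mono first_le prod_le) auto
  also have "\<dots> = 2^(l+1) / fact (l+1)" by (simp add: field_simps)
  finally show ?thesis .
qed

lemma summand_tendsto:
  assumes c: "(\<lambda>K. real (c K) / real K) \<longlonglongrightarrow> 1 - s"
      and r: "(\<lambda>K. real (r K) / real K) \<longlonglongrightarrow> 1 - s"
  shows "(\<lambda>K. summand K (c K) (r K) l) \<longlonglongrightarrow> s^(l+1) / fact (l+1)"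
proof -
  have factor: "(\<lambda>K. summand_factor K (c K) (r K) t) \<longlonglongrightarrow> s / real t" if "t \<ge> 1" for t
  proof (cases "odd t")
    case True
    then show ?thesis using linear_ratio_tendsto[OF r, of "real t"] that
      by (simp add: summand_factor_def)
  next
    case False
    then show ?thesis using linear_ratio_tendsto[OF c, of "real t"] that
      by (simp add: summand_factor_def)
  qed
  have "(\<lambda>K. summand K (c K) (r K) l) \<longlonglongrightarrow> s / real (l+1) * (\<Prod>t=1..l. s / real t)"
    unfolding summand_def
    using linear_ratio_tendsto[OF c, of "real (l+1)" 0] factor
    by (intro tendsto_mult tendsto_prod) auto
  also have "s / real (l+1) * (\<Prod>t=1..l. s / real t) = s^(l+1) / fact (l+1)"
    by (simp add: prod_dividef fact_prod field_simps)
  finally show ?thesis .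
qed

theorem lemma7p2:
  fixes \<epsilon> :: real and c r :: "nat \<Rightarrow> nat"
  assumes "0 < \<epsilon>" "\<epsilon> < 1/2"
    and "\<And>K. K \<ge> 2 \<Longrightarrow> c K > 0 \<and> r K > 0"
    and "\<And>K. K \<ge> 2 \<Longrightarrow>
           \<bar>real (c K) / real K - (1 - sqrt (1 - 2*\<epsilon>))\<bar> < real K powr (-1/4)"
    and "\<And>K. K \<ge> 2 \<Longrightarrow>
           \<bar>real (r K) / real K - (1 - sqrt (1 - 2*\<epsilon>))\<bar> < real K powr (-1/4)"
  shows "(\<lambda>K. 1 + (\<Sum>l=0..2*K-2.
            (real K - real (c K)) / (real (l+1) * real K - real (h (l+1)))
            * (\<Prod>t=1..l.
                (real K - (if odd t then real (r K) else 0) - (if even t then real (c K) else 0)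
                  - real (t div 2))
                / (real t * real K - real (h t)))))
         \<longlonglongrightarrow> exp (sqrt (1 - 2*\<epsilon>))"
proof -
  define s where "s = sqrt (1 - 2*\<epsilon>)"
  have "1 - s < 1" using assms(2) by (simp add: s_def)
  have c: "(\<lambda>K. real (c K) / real K) \<longlonglongrightarrow> 1 - s"
    unfolding s_def using assms(4) by (rule tendsto_of_abs_diff_less_powr) auto
  have r: "(\<lambda>K. real (r K) / real K) \<longlonglongrightarrow> 1 - s"
    unfolding s_def using assms(5) by (rule tendsto_of_abs_diff_less_powr) auto
  have "eventually (\<lambda>K. \<forall>l \<le> 2*K-2. \<bar>summand K (c K) (r K) l\<bar> \<le> 2^(l+1) / fact (l+1)) sequentially"
    using eventually_le_of_ratio_tendsto[OF c \<open>1 - s < 1\<close>]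
      eventually_le_of_ratio_tendsto[OF r \<open>1 - s < 1\<close>] eventually_ge_at_top[of 2]
    by eventually_elim (intro allI impI abs_summand_le; simp)
  moreover have "filterlim (\<lambda>K::nat. 2*K-2) at_top sequentially"
    unfolding filterlim_at_top eventually_sequentially
    by (metis add_diff_cancel_right' diff_le_mono le_add2 mult_2 order.trans)
  ultimately have "(\<lambda>K. \<Sum>l=0..2*K-2. summand K (c K) (r K) l) \<longlonglongrightarrow> (\<Sum>l. s^(l+1) / fact (l+1))"
    using summand_tendsto[OF c r] sums_summable[OF sums_exp_minus_one[of 2]]
    by (intro tendsto_truncated_sum_tannery) auto
  then have "(\<lambda>K. 1 + (\<Sum>l=0..2*K-2. summand K (c K) (r K) l)) \<longlonglongrightarrow> 1 + (exp s - 1)"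
    unfolding sums_unique[OF sums_exp_minus_one, symmetric] by (intro tendsto_add tendsto_const)
  then show ?thesis by (simp add: summand_def summand_factor_def s_def)
qed

end
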